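(* Let $k>1$ be an integer, $p=\frac{2k+1}{2k+3}$ and $t=\frac{k+1}{k+2}$. Then bold play is optimal, i.e. $\pi(p,t)=p$.
   Context: Let $\beta_1,\beta_2,\ldots$ be independent Bernoulli random variables with success probability $p$. A stake sequence is a sequence $\gamma=(c_1,c_2,\ldots)$ of non-negative reals with $c_1\ge c_2\ge\cdots$ and $\sum_i c_i=1$; write $S_\gamma=\sum_i c_i\beta_i$. For $0\le p\le t\le 1$ define $\pi(p,t)=\sup\{\mathbf P(S_\gamma\ge t)\mid \gamma \text{ a stake sequence}\}$. Bold play for threshold $t$ is the stake sequence with $c_i=\frac1m$ for $i\le m$ and $c_i=0$ for $i>m$, where $m=\lfloor 1/t\rfloor$; it is optimal if it attains $\pi(p,t)$. For $t>\frac12$ bold play is $c_1=1$, with success probability $p$. *)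

theory Defs
  imports "HOL-Probability.Probability"
begin

text \<open>The i.i.d. Bernoulli(p) sequence beta_0, beta_1, ... as the coordinates of the
  infinite product of Bernoulli distributions (indices shifted to start at 0).\<close>
definition bern_seq :: "real \<Rightarrow> (nat \<Rightarrow> bool) measure" where
  "bern_seq p = PiM UNIV (\<lambda>_. measure_pmf (bernoulli_pmf p))"

definition stake_seq :: "(nat \<Rightarrow> real) \<Rightarrow> bool" where
  "stake_seq c \<longleftrightarrow> (\<forall>i. 0 \<le> c i) \<and> (\<forall>i. c (Suc i) \<le> c i) \<and> c sums 1"

definition S_gamma :: "(nat \<Rightarrow> real) \<Rightarrow> (nat \<Rightarrow> bool) \<Rightarrow> real" where
  "S_gamma c \<omega> = (\<Sum>i. c i * (if \<omega> i then 1 else 0))"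

definition succ_prob :: "real \<Rightarrow> real \<Rightarrow> (nat \<Rightarrow> real) \<Rightarrow> real" where
  "succ_prob p t c = measure (bern_seq p) {\<omega> \<in> space (bern_seq p). S_gamma c \<omega> \<ge> t}"

definition pi_opt :: "real \<Rightarrow> real \<Rightarrow> real" where
  "pi_opt p t = (SUP c \<in> {c. stake_seq c}. succ_prob p t c)"

end

theory Submission
  imports Defs
begin

text \<open>Colour the coordinates independently and uniformly with M = 2k + 3 colours.
  For two distinct colours a and b, the events that coordinate i avoids both colours are
  independent with probability 1 - 2/M = p, and for these Bernoulli variables S_gamma \<ge> t
  says exactly that the stakes coloured a or b weigh at most s = 1 - t = 1/(k + 2).
  Averaging over the M(M - 1) ordered pairs (a, b), the success probability is at most one
  minus the expected fraction of heavy pairs, those whose two colours weigh more than s.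
  Any unit mass on M points has at least 2(M - 1) heavy pairs, so the success probability
  is at most 1 - 2/M = p, which bold play (a single stake 1) attains.\<close>

lemma mod_add_left_cancel_less:
  fixes M :: nat
  assumes "d < M" "d' < M" "(a + d) mod M = (a + d') mod M"
  shows "d = d'"
proof -
  have "(int a + int d) mod int M = (int a + int d') mod int M"
    using assms(3) by (metis of_nat_add zmod_int)
  then have "(int a + int d - int a) mod int M = (int a + int d' - int a) mod int M"
    by (rule mod_diff_cong) simp
  then have "int (d mod M) = int (d' mod M)"
    by (simp add: zmod_int)
  then show ?thesis
    using assms(1,2) by simp
qed

lemma bij_betw_mod_add:
  fixes M :: nat
  shows "bij_betw (\<lambda>a. (a + d) mod M) {..<M} {..<M}"
proof -
  have "inj_on (\<lambda>a. (a + d) mod M) {..<M}"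
    by (intro inj_onI) (metis add.commute lessThan_iff mod_add_left_cancel_less)
  moreover have "(\<lambda>a. (a + d) mod M) ` {..<M} \<subseteq> {..<M}"
    by auto
  ultimately show ?thesis
    by (simp add: bij_betw_def endo_inj_surj)
qed

lemma sum_mod_add_shift:
  fixes x :: "nat \<Rightarrow> 'a::comm_monoid_add"
  shows "(\<Sum>a<M. x ((a + d) mod M)) = (\<Sum>a<M. x a)"
  using sum.reindex_bij_betw[OF bij_betw_mod_add] .

lemma mod_add_neq_self:
  fixes M :: nat
  assumes "0 < d" "d < M"
  shows "(a + d) mod M \<noteq> a mod M"
  using mod_add_left_cancel_less[of d M 0 a] assms by auto

definition off_diagonal :: "'a set \<Rightarrow> ('a \<times> 'a) set" where
  "off_diagonal A = {(a, b) \<in> A \<times> A. a \<noteq> b}"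

lemma finite_off_diagonal [simp]: "finite A \<Longrightarrow> finite (off_diagonal A)"
  unfolding off_diagonal_def by (rule finite_subset[of _ "A \<times> A"]) auto

lemma card_off_diagonal:
  assumes "finite A"
  shows "card (off_diagonal A) = card A * (card A - 1)"
proof -
  have "off_diagonal A = A \<times> A - (\<lambda>a. (a, a)) ` A"
    unfolding off_diagonal_def by auto
  moreover have "card ((\<lambda>a. (a, a)) ` A) = card A"
    by (simp add: card_image inj_on_def)
  ultimately show ?thesis
    using assms by (simp add: card_Diff_subset[of "(\<lambda>a. (a, a)) ` A"] image_subset_iff
        card_cartesian_product diff_mult_distrib2)
qed

definition heavy_pairs :: "(nat \<Rightarrow> real) \<Rightarrow> nat \<Rightarrow> real \<Rightarrow> (nat \<times> nat) set" where
  "heavy_pairs x M s = {(a, b) \<in> off_diagonal {..<M}. s < x a + x b}"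

lemma finite_heavy_pairs [simp]: "finite (heavy_pairs x M s)"
  unfolding heavy_pairs_def by (rule finite_subset[of _ "off_diagonal {..<M}"]) auto

lemma card_heavy_pairs_heavy_point:
  assumes nonneg: "\<forall>a<M. 0 \<le> x a" and u: "u < M" "s < x u"
  shows "2 * (M - 1) \<le> card (heavy_pairs x M s)"
proof -
  define R where "R = {..<M} - {u}"
  have "Pair u ` R \<union> (\<lambda>b. (b, u)) ` R \<subseteq> heavy_pairs x M s"
    using nonneg u unfolding R_def heavy_pairs_def off_diagonal_def
    by (auto intro: add_nonneg_pos add_pos_nonneg less_le_trans[of s "x u"] simp: add_increasing add_increasing2)
  then have "card (Pair u ` R \<union> (\<lambda>b. (b, u)) ` R) \<le> card (heavy_pairs x M s)"
    by (intro card_mono) auto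
  moreover have "card (Pair u ` R \<union> (\<lambda>b. (b, u)) ` R) = 2 * (M - 1)"
    using u by (subst card_Un_disjoint) (auto simp: R_def card_image inj_on_def)
  ultimately show ?thesis
    by simp
qed

text \<open>The M sums x a + x (a + d) add up to 2, and M - 1 of them being at most s leaves
  at least 2 s for the last one, which forces two maximal points.\<close>
lemma two_heavy_pairs_per_shift:
  fixes M d :: nat
  assumes le: "\<forall>a<M. x a \<le> s" and sum1: "(\<Sum>a<M. x a) = 1" and Ms: "real (M + 1) * s \<le> 2"
    and max_unique: "\<And>a b. a < M \<Longrightarrow> b < M \<Longrightarrow> x a = s \<Longrightarrow> x b = s \<Longrightarrow> a = b"
    and d: "0 < d" "d < M"
  shows "2 \<le> card {a \<in> {..<M}. s < x a + x ((a + d) mod M)}"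
proof (rule ccontr)
  define g where "g a = x a + x ((a + d) mod M)" for a
  define K where "K = {a \<in> {..<M}. s < g a}"
  assume "\<not> 2 \<le> card {a \<in> {..<M}. s < x a + x ((a + d) mod M)}"
  then have "card K \<le> 1"
    unfolding K_def g_def by simp
  moreover have "finite K"
    unfolding K_def by simp
  ultimately have "\<exists>a0<M. K \<subseteq> {a0}"
  proof (cases "K = {}")
    case False
    then obtain a0 where "a0 \<in> K"
      by blast
    then show ?thesis
      using \<open>card K \<le> 1\<close> \<open>finite K\<close> card_le_Suc0_iff_eq[of K] unfolding K_def by auto
  qed (use d in auto)
  then obtain a0 where a0: "a0 < M" and K_sub: "K \<subseteq> {a0}"
    by blast
  have x_le: "x a \<le> s" "x ((a + d) mod M) \<le> s" if "a < M" for a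
    using le that d by auto
  have "2 = (\<Sum>a<M. g a)"
    unfolding g_def sum.distrib sum_mod_add_shift sum1 by simp
  also have "\<dots> \<le> (\<Sum>a<M. if a = a0 then g a0 else s)"
    using K_sub by (intro sum_mono) (auto simp: K_def not_less)
  also have "\<dots> = g a0 + real (M - 1) * s"
    using a0 by (simp add: sum.If_cases Int_absorb1 card_Diff_singleton of_nat_diff flip: Diff_eq)
  finally have "2 * s \<le> g a0"
    using Ms a0 by (simp add: of_nat_diff algebra_simps)
  then have "x a0 = s" "x ((a0 + d) mod M) = s"
    using x_le[OF a0] unfolding g_def by linarith+
  moreover have "(a0 + d) mod M \<noteq> a0"
    using mod_add_neq_self[OF d, of a0] a0 by simp
  moreover have "(a0 + d) mod M < M"
    using d by simp
  ultimately show False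
    using max_unique a0 by blast
qed

lemma card_heavy_pairs_no_two_maximal:
  fixes M :: nat
  assumes le: "\<forall>a<M. x a \<le> s" and sum1: "(\<Sum>a<M. x a) = 1" and Ms: "real (M + 1) * s \<le> 2"
    and max_unique: "\<And>a b. a < M \<Longrightarrow> b < M \<Longrightarrow> x a = s \<Longrightarrow> x b = s \<Longrightarrow> a = b"
  shows "2 * (M - 1) \<le> card (heavy_pairs x M s)"
proof -
  define K where "K d = {a \<in> {..<M}. s < x a + x ((a + d) mod M)}" for d
  define shift_pair where "shift_pair = (\<lambda>(d, a). (a, (a + d) mod M))"
  have two_heavy_shift: "2 \<le> card (K d)" if "0 < d" "d < M" for d
    unfolding K_def by (rule two_heavy_pairs_per_shift[OF le sum1 Ms max_unique that])
  have "inj_on shift_pair (Sigma {0<..<M} K)"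
  proof (rule inj_onI)
    fix p q
    assume "p \<in> Sigma {0<..<M} K" "q \<in> Sigma {0<..<M} K" "shift_pair p = shift_pair q"
    then show "p = q"
      unfolding shift_pair_def using mod_add_left_cancel_less[of "fst p" M "fst q" "snd p"]
      by (auto simp: case_prod_beta prod_eq_iff)
  qed
  moreover have "shift_pair ` Sigma {0<..<M} K \<subseteq> heavy_pairs x M s"
  proof (rule image_subsetI, clarify)
    fix d a
    assume "a \<in> K d" "d \<in> {0<..<M}"
    then have "0 < d" "d < M" "a < M" "s < x a + x ((a + d) mod M)"
      unfolding K_def by auto
    moreover have "(a + d) mod M \<noteq> a"
      using mod_add_neq_self[of d M a] calculation by simp
    ultimately show "shift_pair (d, a) \<in> heavy_pairs x M s"
      unfolding shift_pair_def heavy_pairs_def off_diagonal_def by simp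
  qed
  ultimately have "card (Sigma {0<..<M} K) \<le> card (heavy_pairs x M s)"
    using card_mono[OF finite_heavy_pairs] by (metis card_image)
  moreover have "2 * (M - 1) \<le> card (Sigma {0<..<M} K)"
  proof -
    have "2 * (M - 1) = (\<Sum>d\<in>{0<..<M}. 2)"
      by simp
    also have "\<dots> \<le> (\<Sum>d\<in>{0<..<M}. card (K d))"
      using two_heavy_shift by (intro sum_mono) simp
    also have "\<dots> = card (Sigma {0<..<M} K)"
      by (rule card_SigmaI[symmetric]) (simp_all add: K_def)
    finally show ?thesis .
  qed
  ultimately show ?thesis
    by simp
qed

lemma sum_bounded_above_eq_mult:
  fixes x :: "'a \<Rightarrow> real"
  assumes "finite T" "\<forall>a\<in>T. x a \<le> s" "(\<Sum>a\<in>T. x a) = real n * s" "0 < s"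
  shows "n \<le> card T" and "card T = n \<Longrightarrow> \<forall>a\<in>T. x a = s"
proof -
  have "real n * s \<le> real (card T) * s"
    using sum_bounded_above[of T x s] assms(2,3) by simp
  then show "n \<le> card T"
    using assms(4) by simp
  assume "card T = n"
  then have "(\<Sum>a\<in>T. s - x a) = 0"
    using assms(3) by (simp add: sum_subtractf)
  then show "\<forall>a\<in>T. x a = s"
    using sum_nonneg_eq_0_iff[OF assms(1), of "\<lambda>a. s - x a"] assms(2) by simp
qed

lemma card_heavy_pairs_two_maximal:
  fixes k :: nat
  defines "M \<equiv> 2 * k + 3" and "s \<equiv> 1 / (real k + 2)"
  assumes k: "2 \<le> k" and nonneg: "\<forall>a<M. 0 \<le> x a" and le: "\<forall>a<M. x a \<le> s"
    and sum1: "(\<Sum>a<M. x a) = 1"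
    and uv: "u < M" "v < M" "u \<noteq> v" "x u = s" "x v = s"
  shows "2 * (M - 1) \<le> card (heavy_pairs x M s)"
proof -
  define T where "T = {w \<in> {..<M}. w \<noteq> u \<and> w \<noteq> v \<and> 0 < x w}"
  have s_pos: "0 < s"
    unfolding s_def by simp
  have fin_T: "finite T"
    unfolding T_def by simp
  have "(\<Sum>a<M. x a) = (\<Sum>a\<in>{..<M} - {u, v}. x a) + (\<Sum>a\<in>{u, v}. x a)"
    using uv by (intro sum.subset_diff) auto
  also have "(\<Sum>a\<in>{..<M} - {u, v}. x a) = (\<Sum>a\<in>T. x a)"
    using nonneg by (intro sum.mono_neutral_right) (auto simp: T_def not_less intro: antisym)
  finally have sum_T: "(\<Sum>a\<in>T. x a) = real k * s"
    using sum1 uv(3-5) unfolding s_def by (simp add: field_simps)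
  have "\<forall>a\<in>T. x a \<le> s"
    using le by (auto simp: T_def)
  note card_T = sum_bounded_above_eq_mult[OF fin_T this sum_T s_pos]
  show ?thesis
  proof (cases "card T = k")
    case True
    define S where "S = insert u (insert v T)"
    have "off_diagonal S \<subseteq> heavy_pairs x M s"
      using card_T(2)[OF True] uv s_pos
      by (auto simp: S_def T_def off_diagonal_def heavy_pairs_def)
    then have "card (off_diagonal S) \<le> card (heavy_pairs x M s)"
      by (intro card_mono) simp
    moreover have "card (off_diagonal S) = (k + 2) * (k + 1)"
      using True uv(3) fin_T by (simp add: card_off_diagonal S_def T_def)
    moreover have "2 * (M - 1) \<le> (k + 2) * (k + 1)"
      unfolding M_def by (simp add: algebra_simps) (use mult_le_mono1[OF k, of k] k in linarith)
    ultimately show ?thesis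
      by linarith
  next
    case False
    then have "k + 1 \<le> card T"
      using card_T(1) by simp
    define W where "W = {u, v} \<times> T \<union> T \<times> {u, v} \<union> {(u, v), (v, u)}"
    have "W \<subseteq> heavy_pairs x M s"
      using uv s_pos by (auto simp: W_def T_def heavy_pairs_def off_diagonal_def)
    then have "card W \<le> card (heavy_pairs x M s)"
      by (intro card_mono) simp
    moreover have "card W = 4 * card T + 2"
      using fin_T uv(3) unfolding W_def
      by (subst card_Un_disjoint; (subst card_Un_disjoint)?) (auto simp: T_def card_cartesian_product)
    ultimately show ?thesis
      using \<open>k + 1 \<le> card T\<close> unfolding M_def by simp
  qed
qed

lemma card_heavy_pairs_ge:
  fixes k :: nat
  defines "M \<equiv> 2 * k + 3" and "s \<equiv> 1 / (real k + 2)"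
  assumes k: "2 \<le> k" and nonneg: "\<forall>a<M. 0 \<le> x a" and sum1: "(\<Sum>a<M. x a) = 1"
  shows "2 * (M - 1) \<le> card (heavy_pairs x M s)"
proof (cases "\<exists>u<M. s < x u")
  case True
  then show ?thesis
    using card_heavy_pairs_heavy_point[OF nonneg] by blast
next
  case False
  then have le: "\<forall>a<M. x a \<le> s"
    using not_less by blast
  show ?thesis
  proof (cases "\<exists>u<M. \<exists>v<M. u \<noteq> v \<and> x u = s \<and> x v = s")
    case True
    then show ?thesis
      using card_heavy_pairs_two_maximal[OF k] nonneg le sum1 unfolding M_def s_def by blast
  next
    case False
    have "real (M + 1) * s \<le> 2"
      unfolding M_def s_def by (simp add: field_simps)
    then show ?thesis
      using card_heavy_pairs_no_two_maximal[OF le sum1] False by blast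
  qed
qed

lemma measurable_iid_map:
  "(\<lambda>x i. f (x i)) \<in> PiM (UNIV :: 'i set) (\<lambda>_. measure_pmf U) \<rightarrow>\<^sub>M PiM UNIV (\<lambda>_. measure_pmf (map_pmf f U))"
proof (rule measurable_PiM_single')
  fix i :: 'i
  have "(\<lambda>x. x i) \<in> PiM UNIV (\<lambda>_. measure_pmf U) \<rightarrow>\<^sub>M measure_pmf U"
    by (rule measurable_component_singleton) simp
  then show "(\<lambda>x. f (x i)) \<in> PiM UNIV (\<lambda>_. measure_pmf U) \<rightarrow>\<^sub>M measure_pmf (map_pmf f U)"
    by (rule measurable_compose) simp
qed (simp add: space_PiM)

lemma distr_PiM_iid_map_pmf:
  "distr (PiM (UNIV :: 'i set) (\<lambda>_. measure_pmf U)) (PiM UNIV (\<lambda>_. measure_pmf (map_pmf f U)))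
     (\<lambda>x i. f (x i)) = PiM UNIV (\<lambda>_. measure_pmf (map_pmf f U))"
  (is "distr ?C ?B ?g = ?B")
proof (rule measure_eqI_PiM_infinite[symmetric, OF refl])
  interpret B: prob_space ?B
    by (intro prob_space_PiM) (simp add: measure_pmf.prob_space_axioms)
  show "finite_measure ?B"
    by unfold_locales
  show "sets (distr ?C ?B ?g) = sets ?B"
    by simp
  fix J :: "'i set" and A
  assume J: "finite J" "J \<subseteq> UNIV" and A: "\<And>i. i \<in> J \<Longrightarrow> A i \<in> sets (measure_pmf (map_pmf f U))"
  let ?emb = "prod_emb UNIV (\<lambda>_. measure_pmf (map_pmf f U)) J (Pi\<^sub>E J A)"
  have "?B ?emb = (\<Prod>j\<in>J. emeasure U (f -` A j))"
    using J A by (subst emeasure_PiM_emb) (auto simp: measure_pmf.prob_space_axioms)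
  also have "\<dots> = ?C (prod_emb UNIV (\<lambda>_. measure_pmf U) J (Pi\<^sub>E J (\<lambda>j. f -` A j)))"
    using J by (intro emeasure_PiM_emb[symmetric]) (auto simp: measure_pmf.prob_space_axioms)
  also have "prod_emb UNIV (\<lambda>_. measure_pmf U) J (Pi\<^sub>E J (\<lambda>j. f -` A j)) = ?g -` ?emb \<inter> space ?C"
    by (auto simp: prod_emb_def space_PiM PiE_iff)
  also have "?C \<dots> = distr ?C ?B ?g ?emb"
    using J A by (intro emeasure_distr[symmetric] measurable_iid_map sets_PiM_I) auto
  finally show "?B ?emb = distr ?C ?B ?g ?emb" .
qed

lemma map_pmf_of_set_not_mem:
  assumes "finite A" "A \<noteq> {}" "B \<subseteq> A"
  shows "map_pmf (\<lambda>a. a \<notin> B) (pmf_of_set A) = bernoulli_pmf (1 - card B / card A)"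
proof (rule pmf_eqI)
  have card_le: "card B \<le> card A" and card_pos: "0 < card A"
    using assms by (auto intro: card_mono simp: card_gt_0_iff)
  have "A \<inter> (\<lambda>a. a \<notin> B) -` {True} = A - B" "A \<inter> (\<lambda>a. a \<notin> B) -` {False} = B"
    using assms(3) by auto
  moreover have "card (A - B) = card A - card B"
    using assms by (meson card_Diff_subset finite_subset)
  moreover have "0 \<le> 1 - real (card B) / real (card A)" "1 - real (card B) / real (card A) \<le> 1"
    using card_le card_pos by (auto simp: field_simps)
  ultimately show "pmf (map_pmf (\<lambda>a. a \<notin> B) (pmf_of_set A)) z = pmf (bernoulli_pmf (1 - card B / card A)) z" for z
    using assms card_le card_pos
    by (cases z) (simp_all add: pmf_map measure_pmf_of_set of_nat_diff Int_commute field_simps)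
qed

lemma summable_if_nonneg:
  fixes c :: "nat \<Rightarrow> real"
  assumes "\<forall>i. 0 \<le> c i" "summable c"
  shows "summable (\<lambda>i. if P i then c i else 0)"
  by (rule summable_comparison_test'[of c 0]) (use assms in auto)

text \<open>Colour classes are taken modulo M so that they partition the stakes for every
  colouring, not only for almost every one.\<close>
definition colour_mass :: "(nat \<Rightarrow> real) \<Rightarrow> nat \<Rightarrow> (nat \<Rightarrow> nat) \<Rightarrow> nat \<Rightarrow> real" where
  "colour_mass c M ch a = (\<Sum>i. if ch i mod M = a then c i else 0)"

lemma colour_mass_nonneg:
  assumes "\<forall>i. 0 \<le> c i" "summable c"
  shows "0 \<le> colour_mass c M ch a"
  unfolding colour_mass_def using assms by (intro suminf_nonneg summable_if_nonneg) auto

lemma sum_colour_mass: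
  assumes c: "\<forall>i. 0 \<le> c i" "c sums 1" and "0 < M"
  shows "(\<Sum>a<M. colour_mass c M ch a) = 1"
proof -
  have "(\<Sum>a<M. colour_mass c M ch a) = (\<Sum>i. \<Sum>a<M. if ch i mod M = a then c i else 0)"
    unfolding colour_mass_def using c by (intro suminf_sum[symmetric] summable_if_nonneg) (auto simp: sums_iff)
  also have "\<dots> = (\<Sum>i. c i)"
    using \<open>0 < M\<close> by (simp add: sum.delta')
  finally show ?thesis
    using c(2) by (simp add: sums_iff)
qed

lemma S_gamma_two_colours_excluded:
  assumes c: "\<forall>i. 0 \<le> c i" "c sums 1" and "a \<noteq> b"
  shows "S_gamma c (\<lambda>i. ch i mod M \<notin> {a, b}) = 1 - colour_mass c M ch a - colour_mass c M ch b"
proof -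
  let ?rest = "\<lambda>i. if ch i mod M \<notin> {a, b} then c i else 0"
  let ?col = "\<lambda>a i. if ch i mod M = a then c i else 0"
  have summable: "summable ?rest" "summable (?col a)" "summable (?col b)"
    using c by (auto intro!: summable_if_nonneg simp: sums_iff)
  have "(\<lambda>i. ?rest i + ?col a i + ?col b i) sums (suminf ?rest + suminf (?col a) + suminf (?col b))"
    by (intro sums_add summable_sums summable)
  moreover have "(\<lambda>i. ?rest i + ?col a i + ?col b i) = c"
    using \<open>a \<noteq> b\<close> by auto
  ultimately have "c sums (suminf ?rest + suminf (?col a) + suminf (?col b))"
    by simp
  then have "1 = suminf ?rest + colour_mass c M ch a + colour_mass c M ch b"
    unfolding colour_mass_def using sums_unique2[OF c(2)] by blast
  moreover have "S_gamma c (\<lambda>i. ch i mod M \<notin> {a, b}) = suminf ?rest"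
    unfolding S_gamma_def by (intro arg_cong[where f = suminf]) auto
  ultimately show ?thesis
    by simp
qed

lemma space_bern_seq [simp]: "space (bern_seq p) = UNIV"
  by (simp add: bern_seq_def space_PiM)

lemma measurable_S_gamma [measurable]: "S_gamma c \<in> borel_measurable (bern_seq p)"
  unfolding S_gamma_def bern_seq_def by (rule borel_measurable_suminf) measurable

definition random_colouring :: "nat \<Rightarrow> (nat \<Rightarrow> nat) measure" where
  "random_colouring M = PiM UNIV (\<lambda>_. measure_pmf (pmf_of_set {..<M}))"

lemma prob_space_random_colouring: "prob_space (random_colouring M)"
  unfolding random_colouring_def by (intro prob_space_PiM) (simp add: measure_pmf.prob_space_axioms)

lemma space_random_colouring [simp]: "space (random_colouring M) = UNIV"
  by (simp add: random_colouring_def space_PiM)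

lemma measurable_colour_mass [measurable]:
  "(\<lambda>ch. colour_mass c M ch a) \<in> borel_measurable (random_colouring N)"
  unfolding colour_mass_def random_colouring_def by (rule borel_measurable_suminf) measurable

lemma succ_prob_eq_colour_pair:
  assumes c: "\<forall>i. 0 \<le> c i" "c sums 1" and ab: "a < M" "b < M" "a \<noteq> b"
  shows "succ_prob (1 - 2 / real M) t c
           = measure (random_colouring M) {ch. colour_mass c M ch a + colour_mass c M ch b \<le> 1 - t}"
proof -
  define coin where "coin col = (col mod M \<notin> {a, b})" for col
  define C where "C = random_colouring M"
  define B where "B = bern_seq (1 - 2 / real M)"
  have "map_pmf coin (pmf_of_set {..<M}) = map_pmf (\<lambda>col. col \<notin> {a, b}) (pmf_of_set {..<M})"
  proof (rule map_pmf_cong[OF refl])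
    fix col
    assume "col \<in> set_pmf (pmf_of_set {..<M})"
    then have "col < M"
      using ab by (subst (asm) set_pmf_of_set) auto
    then show "coin col = (col \<notin> {a, b})"
      unfolding coin_def by simp
  qed
  also have "\<dots> = bernoulli_pmf (1 - 2 / real M)"
    using ab by (subst map_pmf_of_set_not_mem) auto
  finally have coin_distr: "map_pmf coin (pmf_of_set {..<M}) = bernoulli_pmf (1 - 2 / real M)" .
  have B_eq: "B = distr C B (\<lambda>ch i. coin (ch i))"
    using distr_PiM_iid_map_pmf[where f = coin and U = "pmf_of_set {..<M}"]
    unfolding B_def C_def bern_seq_def random_colouring_def coin_distr by (rule sym)
  have meas: "(\<lambda>ch i. coin (ch i)) \<in> C \<rightarrow>\<^sub>M B"
    using measurable_iid_map[where f = coin and U = "pmf_of_set {..<M}"]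
    unfolding B_def C_def bern_seq_def random_colouring_def coin_distr .
  have "succ_prob (1 - 2 / real M) t c = measure B {\<omega> \<in> space B. t \<le> S_gamma c \<omega>}"
    unfolding succ_prob_def B_def ..
  also have "\<dots> = measure (distr C B (\<lambda>ch i. coin (ch i))) {\<omega> \<in> space B. t \<le> S_gamma c \<omega>}"
    by (subst B_eq) (rule refl)
  also have "\<dots> = measure C ((\<lambda>ch i. coin (ch i)) -` {\<omega> \<in> space B. t \<le> S_gamma c \<omega>} \<inter> space C)"
    by (rule measure_distr[OF meas]) (unfold B_def, measurable)
  also have "\<dots> = measure C {ch. colour_mass c M ch a + colour_mass c M ch b \<le> 1 - t}"
    using S_gamma_two_colours_excluded[OF c ab(3)]
    by (intro arg_cong[where f = "measure C"]) (auto simp: B_def C_def coin_def)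
  finally show ?thesis
    unfolding C_def .
qed

lemma (in prob_space) sum_prob_le_of_card_le:
  assumes "finite Q" "\<And>q. q \<in> Q \<Longrightarrow> A q \<in> events"
    and "\<And>\<omega>. \<omega> \<in> space M \<Longrightarrow> card {q \<in> Q. \<omega> \<in> A q} \<le> m"
  shows "(\<Sum>q\<in>Q. prob (A q)) \<le> m"
proof -
  have integrable: "integrable M (indicator (A q) :: _ \<Rightarrow> real)" if "q \<in> Q" for q
    using assms(2)[OF that] by (simp add: integrable_indicator_iff less_top[symmetric])
  have "(\<Sum>q\<in>Q. prob (A q)) = expectation (\<lambda>\<omega>. \<Sum>q\<in>Q. indicator (A q) \<omega>)"
    using assms(2) integrable by (subst Bochner_Integration.integral_sum) auto
  also have "\<dots> \<le> expectation (\<lambda>_. real m)"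
  proof (rule integral_mono)
    fix \<omega>
    assume "\<omega> \<in> space M"
    have "(\<Sum>q\<in>Q. indicator (A q) \<omega> :: real) = real (card {q \<in> Q. \<omega> \<in> A q})"
      using assms(1) by (simp add: indicator_def sum.If_cases Int_def)
    then show "(\<Sum>q\<in>Q. indicator (A q) \<omega>) \<le> real m"
      using assms(3)[OF \<open>\<omega> \<in> space M\<close>] by simp
  qed (use integrable in auto)
  also have "\<dots> = m"
    by (simp add: prob_space)
  finally show ?thesis .
qed

lemma succ_prob_le:
  fixes k :: nat
  defines "p \<equiv> (2 * real k + 1) / (2 * real k + 3)" and "t \<equiv> (real k + 1) / (real k + 2)"
  assumes k: "2 \<le> k" and c: "\<forall>i. 0 \<le> c i" "c sums 1"
  shows "succ_prob p t c \<le> p"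
proof -
  define M where "M = 2 * k + 3"
  define s where "s = 1 / (real k + 2)"
  define Q where "Q = off_diagonal {..<M}"
  define A where "A q = {ch. colour_mass c M ch (fst q) + colour_mass c M ch (snd q) \<le> s}" for q
  interpret prob_space "random_colouring M"
    by (rule prob_space_random_colouring)
  have p_eq: "p = 1 - 2 / real M" and t_eq: "1 - t = s"
    unfolding p_def M_def t_def s_def by (simp_all add: field_simps)
  have prob_A: "prob (A q) = succ_prob p t c" if "q \<in> Q" for q
    using that succ_prob_eq_colour_pair[OF c, of "fst q" M "snd q" t]
    unfolding p_eq t_eq A_def Q_def off_diagonal_def by auto
  have events: "A q \<in> events" for q
  proof -
    have "{ch \<in> space (random_colouring M). colour_mass c M ch (fst q) + colour_mass c M ch (snd q) \<le> s} \<in> events"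
      by measurable
    then show ?thesis
      by (simp add: A_def)
  qed
  have "card {q \<in> Q. ch \<in> A q} \<le> card Q - 2 * (M - 1)" for ch
  proof -
    have "{q \<in> Q. ch \<in> A q} = Q - heavy_pairs (colour_mass c M ch) M s"
      by (auto simp: A_def Q_def heavy_pairs_def)
    moreover have "heavy_pairs (colour_mass c M ch) M s \<subseteq> Q"
      by (auto simp: Q_def heavy_pairs_def)
    moreover have "2 * (M - 1) \<le> card (heavy_pairs (colour_mass c M ch) M s)"
      using card_heavy_pairs_ge[OF k] colour_mass_nonneg[OF c(1) sums_summable[OF c(2)]]
        sum_colour_mass[OF c] unfolding M_def s_def by simp
    ultimately show ?thesis
      by (simp add: card_Diff_subset Q_def)
  qed
  then have "(\<Sum>q\<in>Q. prob (A q)) \<le> real (card Q - 2 * (M - 1))"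
    by (intro sum_prob_le_of_card_le events) (simp add: Q_def)
  moreover have "(\<Sum>q\<in>Q. prob (A q)) = real (card Q) * succ_prob p t c"
    using prob_A by simp
  moreover have "card Q = M * (M - 1)"
    by (simp add: Q_def card_off_diagonal)
  ultimately have "real M * real (M - 1) * succ_prob p t c \<le> (real M - 2) * real (M - 1)"
    unfolding M_def by (simp add: of_nat_diff algebra_simps)
  then have "real M * succ_prob p t c \<le> real M - 2"
    unfolding M_def by (simp add: mult.commute[of _ "real (M - 1)"] mult.assoc)
  then show ?thesis
    unfolding p_eq M_def by (simp add: field_simps)
qed

lemma stake_seq_single_stake: "stake_seq (\<lambda>i. if i = 0 then 1 else 0)"
  unfolding stake_seq_def using sums_single[of 0 "\<lambda>_. 1 :: real"] by auto

lemma succ_prob_single_stake: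
  fixes p t :: real
  assumes p: "0 \<le> p" "p \<le> 1" and t: "0 < t" "t \<le> 1"
  shows "succ_prob p t (\<lambda>i. if i = 0 then 1 else 0) = p"
proof -
  have S: "S_gamma (\<lambda>i. if i = 0 then 1 else 0) \<omega> = (if \<omega> 0 then 1 else 0)" for \<omega>
    unfolding S_gamma_def by (subst suminf_finite[of "{0}"]) auto
  have "{\<omega> \<in> space (bern_seq p). t \<le> S_gamma (\<lambda>i. if i = 0 then 1 else 0) \<omega>}
          = (\<lambda>\<omega>. \<omega> 0) -` {True} \<inter> space (bern_seq p)"
    using t by (auto simp: S)
  then have "succ_prob p t (\<lambda>i. if i = 0 then 1 else 0)
               = measure (distr (bern_seq p) (measure_pmf (bernoulli_pmf p)) (\<lambda>\<omega>. \<omega> 0)) {True}"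
    unfolding succ_prob_def bern_seq_def
    by (subst measure_distr) (auto intro: measurable_component_singleton)
  also have "\<dots> = measure (measure_pmf (bernoulli_pmf p)) {True}"
    unfolding bern_seq_def
    by (subst distr_PiM_component) (simp_all add: measure_pmf.prob_space_axioms)
  also have "\<dots> = p"
    using p by (simp add: measure_pmf_single)
  finally show ?thesis .
qed

theorem proposition14:
  fixes k :: nat
  assumes "k > 1"
  shows "pi_opt ((2 * real k + 1) / (2 * real k + 3)) ((real k + 1) / (real k + 2))
         = (2 * real k + 1) / (2 * real k + 3)"
  unfolding pi_opt_def
proof (rule cSup_eq_maximum)
  let ?p = "(2 * real k + 1) / (2 * real k + 3)" and ?t = "(real k + 1) / (real k + 2)"
  have "succ_prob ?p ?t (\<lambda>i. if i = 0 then 1 else 0) = ?p"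
    by (rule succ_prob_single_stake) (auto simp: field_simps)
  then show "?p \<in> succ_prob ?p ?t ` {c. stake_seq c}"
    using stake_seq_single_stake by force
  show "x \<le> ?p" if "x \<in> succ_prob ?p ?t ` {c. stake_seq c}" for x
    using that succ_prob_le[of k] assms unfolding stake_seq_def by auto
qed

end
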